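(* Let $n\ge 3$ be an odd integer and $(\mathcal{C},\Sigma)$ a tensor $n$-angulated category. Then the Grothendieck group $K_0(\mathcal{C})$ is a commutative ring with multiplication given by $[A][B]=[A\otimes B]$ for objects $A,B$ of $\mathcal{C}$ (in particular this multiplication is well defined).
   Context: All categories are small. Fix an integer $n\ge 3$. Let $\mathcal{C}$ be an additive category with an automorphism $\Sigma$. An $n$-$\Sigma$-sequence in $\mathcal{C}$ is a diagram $A_1\xrightarrow{\alpha_1}A_2\xrightarrow{\alpha_2}\cdots\xrightarrow{\alpha_{n-1}}A_n\xrightarrow{\alpha_n}\Sigma A_1$. Its left rotation is $A_2\xrightarrow{\alpha_2}\cdots\xrightarrow{\alpha_n}\Sigma A_1\xrightarrow{(-1)^n\Sigma\alpha_1}\Sigma A_2$. A morphism from $(A_\bullet,\alpha)$ to $(B_\bullet,\beta)$ is a tuple $(\varphi_1,\dots,\varphi_n)$, $\varphi_i:A_i\to B_i$, with $\beta_i\varphi_i=\varphi_{i+1}\alpha_i$ for $1\le i\le n-1$ and $\beta_n\varphi_n=(\Sigma\varphi_1)\alpha_n$; it is an isomorphism if all $\varphi_i$ are isomorphisms. Direct sums of sequences are taken termwise. $(\mathcal{C},\Sigma)$ is $n$-angulated if it is equipped with a collection $\mathscr N$ of $n$-$\Sigma$-sequences, called $n$-angles, such that: (N1)(a) $\mathscr N$ is closed under direct sums, direct summands and isomorphisms of $n$-$\Sigma$-sequences; (b) for every object $A$, the trivial sequence $A\xrightarrow{1}A\to0\to\cdots\to0\to\Sigma A$ is in $\mathscr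 N$; (c) every morphism $A_1\to A_2$ is the first morphism of some $n$-angle; (N2) an $n$-$\Sigma$-sequence is in $\mathscr N$ iff its left rotation is; (N3) given $n$-angles $(A_\bullet,\alpha),(B_\bullet,\beta)$ and $\varphi_1:A_1\to B_1$, $\varphi_2:A_2\to B_2$ with $\beta_1\varphi_1=\varphi_2\alpha_1$, there exist $\varphi_3,\dots,\varphi_n$ making $(\varphi_1,\dots,\varphi_n)$ a morphism; (N4) in (N3) the $\varphi_i$ can be chosen so that the mapping cone $A_2\oplus B_1\to A_3\oplus B_2\to\cdots\to\Sigma A_1\oplus B_n\to\Sigma A_2\oplus\Sigma B_1$, with maps $\left[\begin{smallmatrix}-\alpha_{i+1}&0\\ \varphi_{i+1}&\beta_i\end{smallmatrix}\right]$ ($1\le i\le n-1$) and last map $\left[\begin{smallmatrix}-\Sigma\alpha_1&0\\ \Sigma\varphi_1&\beta_n\end{smallmatrix}\right]$, is an $n$-angle. Grothendieck group: $F(\mathcal{C})$ is the free abelian group on isomorphism classes $\langle A\rangle$ of objects; for an $n$-angle $A_\bullet$, $\chi(A_\bullet)=\sum_{i=1}^n(-1)^{i+1}\langle A_i\rangle$; $R(\mathcal{C})$ is generated by all $\chi(A_\bullet)$, together with $\langle 0\rangle$ when $n$ is even; $K_0(\mathcal{C})=F(\mathcal{C})/R(\mathcal{C})$, $[A]$ the class of $\langle A\rangle$. An $n$-angulated category $(\mathcal{C},\Sigma)$ is tensor $n$-angulated if it carries a symmetric monoidal (symmetric tensor) structure $(\otimes,I,\alpha,\lambda,\rho,\gamma)$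 with $\otimes$ an additive bifunctor, such that: (1) there are natural isomorphisms $l:A\otimes\Sigma B\to\Sigma(A\otimes B)$ and $r:\Sigma A\otimes B\to\Sigma(A\otimes B)$; (2) for every object $A$, the functors $A\otimes-$ (with $l$) and $-\otimes A$ (with $r$) are $n$-angulated, i.e. for every $n$-angle $A_1\xrightarrow{\alpha_1}\cdots\xrightarrow{\alpha_{n-1}}A_n\xrightarrow{\alpha_n}\Sigma A_1$ the sequences $A\otimes A_1\xrightarrow{1\otimes\alpha_1}\cdots\xrightarrow{1\otimes\alpha_{n-1}}A\otimes A_n\xrightarrow{l\circ(1\otimes\alpha_n)}\Sigma(A\otimes A_1)$ and $A_1\otimes A\xrightarrow{\alpha_1\otimes1}\cdots\xrightarrow{\alpha_{n-1}\otimes 1}A_n\otimes A\xrightarrow{r\circ(\alpha_n\otimes1)}\Sigma(A_1\otimes A)$ are $n$-angles; (3) $\lambda_{\Sigma A}=\Sigma\lambda_A\circ l$ and $\rho_{\Sigma A}=\Sigma\rho_A\circ r$ for all $A$; (4) $\Sigma l\circ r=-\,\Sigma r\circ l$ as maps $\Sigma A\otimes\Sigma B\to\Sigma^2(A\otimes B)$ for all $A,B$. *)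

theory Defs
  imports "HOL-Algebra.Algebra"
begin

section \<open>Additive categories with an automorphism and a tensor structure (data)\<close>

text \<open>A small category is given by a set of objects, hom-sets, composition
  (cmp g f = g o f) and identities.  The additive structure consists of the
  abelian group structure on each hom-set, a chosen zero object and chosen
  biproducts (dsum A B with injections inj1, inj2 and projections prj1, prj2).
  sgo/sgm is the automorphism Sigma on objects/morphisms.  The tensor part
  consists of the bifunctor (tob on objects, tmor on morphisms), the unit,
  associator asc A B C : (A*B)*C -> A*(B*C), unitors lam A : I*A -> A and
  rho A : A*I -> A, symmetry gam A B : A*B -> B*A and the natural isomorphisms
  ltc A B : A * Sigma B -> Sigma(A*B) and rtc A B : Sigma A * B -> Sigma(A*B).\<close>

record ('o,'m) tcat =
  ob :: "'o set"
  hom :: "'o \<Rightarrow> 'o \<Rightarrow> 'm set"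
  cmp :: "'m \<Rightarrow> 'm \<Rightarrow> 'm"
  idm :: "'o \<Rightarrow> 'm"
  madd :: "'m \<Rightarrow> 'm \<Rightarrow> 'm"
  mneg :: "'m \<Rightarrow> 'm"
  mzero :: "'o \<Rightarrow> 'o \<Rightarrow> 'm"
  zobj :: "'o"
  dsum :: "'o \<Rightarrow> 'o \<Rightarrow> 'o"
  inj1 :: "'o \<Rightarrow> 'o \<Rightarrow> 'm"
  inj2 :: "'o \<Rightarrow> 'o \<Rightarrow> 'm"
  prj1 :: "'o \<Rightarrow> 'o \<Rightarrow> 'm"
  prj2 :: "'o \<Rightarrow> 'o \<Rightarrow> 'm"
  sgo :: "'o \<Rightarrow> 'o"
  sgm :: "'m \<Rightarrow> 'm"
  tob :: "'o \<Rightarrow> 'o \<Rightarrow> 'o"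
  tmor :: "'m \<Rightarrow> 'm \<Rightarrow> 'm"
  tunit :: "'o"
  asc :: "'o \<Rightarrow> 'o \<Rightarrow> 'o \<Rightarrow> 'm"
  lam :: "'o \<Rightarrow> 'm"
  rho :: "'o \<Rightarrow> 'm"
  gam :: "'o \<Rightarrow> 'o \<Rightarrow> 'm"
  ltc :: "'o \<Rightarrow> 'o \<Rightarrow> 'm"
  rtc :: "'o \<Rightarrow> 'o \<Rightarrow> 'm"

definition is_category :: "('o,'m) tcat \<Rightarrow> bool" where
  "is_category C \<longleftrightarrow>
    (\<forall>A\<in>ob C. idm C A \<in> hom C A A) \<and>
    (\<forall>A\<in>ob C. \<forall>B\<in>ob C. \<forall>D\<in>ob C. \<forall>f\<in>hom C A B. \<forall>g\<in>hom C B D.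
        cmp C g f \<in> hom C A D) \<and>
    (\<forall>A\<in>ob C. \<forall>B\<in>ob C. \<forall>f\<in>hom C A B.
        cmp C (idm C B) f = f \<and> cmp C f (idm C A) = f) \<and>
    (\<forall>A\<in>ob C. \<forall>B\<in>ob C. \<forall>D\<in>ob C. \<forall>E\<in>ob C.
       \<forall>f\<in>hom C A B. \<forall>g\<in>hom C B D. \<forall>h\<in>hom C D E.
        cmp C h (cmp C g f) = cmp C (cmp C h g) f)"

definition is_preadditive :: "('o,'m) tcat \<Rightarrow> bool" where
  "is_preadditive C \<longleftrightarrow>
    (\<forall>A\<in>ob C. \<forall>B\<in>ob C.
       mzero C A B \<in> hom C A B \<and>
       (\<forall>f\<in>hom C A B. \<forall>g\<in>hom C A B. madd C f g \<in> hom C A B) \<and>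
       (\<forall>f\<in>hom C A B. mneg C f \<in> hom C A B) \<and>
       (\<forall>f\<in>hom C A B. \<forall>g\<in>hom C A B. \<forall>h\<in>hom C A B.
          madd C (madd C f g) h = madd C f (madd C g h)) \<and>
       (\<forall>f\<in>hom C A B. \<forall>g\<in>hom C A B. madd C f g = madd C g f) \<and>
       (\<forall>f\<in>hom C A B. madd C f (mzero C A B) = f) \<and>
       (\<forall>f\<in>hom C A B. madd C f (mneg C f) = mzero C A B)) \<and>
    (\<forall>A\<in>ob C. \<forall>B\<in>ob C. \<forall>D\<in>ob C. \<forall>f\<in>hom C A B. \<forall>f'\<in>hom C A B. \<forall>g\<in>hom C B D.
        cmp C g (madd C f f') = madd C (cmp C g f) (cmp C g f')) \<and>
    (\<forall>A\<in>ob C. \<forall>B\<in>ob C. \<forall>D\<in>ob C. \<forall>f\<in>hom C A B. \<forall>g\<in>hom C B D. \<forall>g'\<in>hom C B D.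
        cmp C (madd C g g') f = madd C (cmp C g f) (cmp C g' f))"

definition is_additive :: "('o,'m) tcat \<Rightarrow> bool" where
  "is_additive C \<longleftrightarrow>
    is_category C \<and> is_preadditive C \<and>
    zobj C \<in> ob C \<and>
    (\<forall>A\<in>ob C. hom C A (zobj C) = {mzero C A (zobj C)} \<and>
               hom C (zobj C) A = {mzero C (zobj C) A}) \<and>
    (\<forall>A\<in>ob C. \<forall>B\<in>ob C.
       dsum C A B \<in> ob C \<and>
       inj1 C A B \<in> hom C A (dsum C A B) \<and> inj2 C A B \<in> hom C B (dsum C A B) \<and>
       prj1 C A B \<in> hom C (dsum C A B) A \<and> prj2 C A B \<in> hom C (dsum C A B) B \<and>
       cmp C (prj1 C A B) (inj1 C A B) = idm C A \<and>
       cmp C (prj2 C A B) (inj2 C A B) = idm C B \<and>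
       cmp C (prj1 C A B) (inj2 C A B) = mzero C B A \<and>
       cmp C (prj2 C A B) (inj1 C A B) = mzero C A B \<and>
       madd C (cmp C (inj1 C A B) (prj1 C A B)) (cmp C (inj2 C A B) (prj2 C A B))
         = idm C (dsum C A B))"

definition is_iso :: "('o,'m) tcat \<Rightarrow> 'o \<Rightarrow> 'o \<Rightarrow> 'm \<Rightarrow> bool" where
  "is_iso C A B f \<longleftrightarrow> f \<in> hom C A B \<and>
     (\<exists>g\<in>hom C B A. cmp C g f = idm C A \<and> cmp C f g = idm C B)"

definition is_sigma_auto :: "('o,'m) tcat \<Rightarrow> bool" where
  "is_sigma_auto C \<longleftrightarrow>
    bij_betw (sgo C) (ob C) (ob C) \<and>
    (\<forall>A\<in>ob C. \<forall>B\<in>ob C. bij_betw (sgm C) (hom C A B) (hom C (sgo C A) (sgo C B))) \<and>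
    (\<forall>A\<in>ob C. sgm C (idm C A) = idm C (sgo C A)) \<and>
    (\<forall>A\<in>ob C. \<forall>B\<in>ob C. \<forall>D\<in>ob C. \<forall>f\<in>hom C A B. \<forall>g\<in>hom C B D.
        sgm C (cmp C g f) = cmp C (sgm C g) (sgm C f)) \<and>
    (\<forall>A\<in>ob C. \<forall>B\<in>ob C. \<forall>f\<in>hom C A B. \<forall>g\<in>hom C A B.
        sgm C (madd C f g) = madd C (sgm C f) (sgm C g))"

section \<open>n-Sigma-sequences\<close>

text \<open>An n-Sigma-sequence A_1 -> ... -> A_n -> Sigma A_1 is represented by a pair
  (X, f) of functions on nat; only the indices 1..n are relevant.\<close>

type_synonym ('o,'m) nseq = "(nat \<Rightarrow> 'o) \<times> (nat \<Rightarrow> 'm)"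

definition is_nseq :: "nat \<Rightarrow> ('o,'m) tcat \<Rightarrow> ('o,'m) nseq \<Rightarrow> bool" where
  "is_nseq n C S \<longleftrightarrow>
    (\<forall>i\<in>{1..n}. fst S i \<in> ob C) \<and>
    (\<forall>i\<in>{1..<n}. snd S i \<in> hom C (fst S i) (fst S (Suc i))) \<and>
    snd S n \<in> hom C (fst S n) (sgo C (fst S 1))"

definition seq_hom :: "nat \<Rightarrow> ('o,'m) tcat \<Rightarrow> ('o,'m) nseq \<Rightarrow> ('o,'m) nseq
    \<Rightarrow> (nat \<Rightarrow> 'm) \<Rightarrow> bool" where
  "seq_hom n C S T \<phi> \<longleftrightarrow>
    (\<forall>i\<in>{1..n}. \<phi> i \<in> hom C (fst S i) (fst T i)) \<and>
    (\<forall>i\<in>{1..<n}. cmp C (snd T i) (\<phi> i) = cmp C (\<phi> (Suc i)) (snd S i)) \<and>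
    cmp C (snd T n) (\<phi> n) = cmp C (sgm C (\<phi> 1)) (snd S n)"

definition seq_iso :: "nat \<Rightarrow> ('o,'m) tcat \<Rightarrow> ('o,'m) nseq \<Rightarrow> ('o,'m) nseq
    \<Rightarrow> (nat \<Rightarrow> 'm) \<Rightarrow> bool" where
  "seq_iso n C S T \<phi> \<longleftrightarrow> seq_hom n C S T \<phi> \<and>
    (\<forall>i\<in>{1..n}. is_iso C (fst S i) (fst T i) (\<phi> i))"

text \<open>Termwise direct sum of two sequences (using the chosen biproducts; the
  last map lands in Sigma of the chosen biproduct of the first terms).\<close>

definition seq_dsum :: "nat \<Rightarrow> ('o,'m) tcat \<Rightarrow> ('o,'m) nseq \<Rightarrow> ('o,'m) nseq
    \<Rightarrow> ('o,'m) nseq" where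
  "seq_dsum n C S T =
    (\<lambda>i. dsum C (fst S i) (fst T i),
     \<lambda>i. if i = n then
          madd C
            (cmp C (sgm C (inj1 C (fst S 1) (fst T 1))) (cmp C (snd S n) (prj1 C (fst S n) (fst T n))))
            (cmp C (sgm C (inj2 C (fst S 1) (fst T 1))) (cmp C (snd T n) (prj2 C (fst S n) (fst T n))))
        else
          madd C
            (cmp C (inj1 C (fst S (Suc i)) (fst T (Suc i))) (cmp C (snd S i) (prj1 C (fst S i) (fst T i))))
            (cmp C (inj2 C (fst S (Suc i)) (fst T (Suc i))) (cmp C (snd T i) (prj2 C (fst S i) (fst T i)))))"

definition triv_obj :: "('o,'m) tcat \<Rightarrow> 'o \<Rightarrow> nat \<Rightarrow> 'o" where
  "triv_obj C A i = (if i \<le> 2 then A else zobj C)"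

definition triv_seq :: "nat \<Rightarrow> ('o,'m) tcat \<Rightarrow> 'o \<Rightarrow> ('o,'m) nseq" where
  "triv_seq n C A =
    (triv_obj C A,
     \<lambda>i. if i = 1 then idm C A
         else if i = n then mzero C (triv_obj C A n) (sgo C A)
         else mzero C (triv_obj C A i) (triv_obj C A (Suc i)))"

definition sign_pow :: "nat \<Rightarrow> ('o,'m) tcat \<Rightarrow> 'm \<Rightarrow> 'm" where
  "sign_pow n C f = (if even n then f else mneg C f)"

definition rot_seq :: "nat \<Rightarrow> ('o,'m) tcat \<Rightarrow> ('o,'m) nseq \<Rightarrow> ('o,'m) nseq" where
  "rot_seq n C S =
    (\<lambda>i. if i < n then fst S (Suc i) else sgo C (fst S 1),
     \<lambda>i. if i < n then snd S (Suc i) else sign_pow n C (sgm C (snd S 1)))"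

text \<open>Mapping cone of a morphism phi : S -> T, with terms A_{i+1} + B_i
  (i < n), Sigma A_1 + B_n, and the matrix maps of the paper (the zero entries
  are omitted).  The last map goes into Sigma(A_2 + B_1), identified with
  Sigma A_2 + Sigma B_1 via Sigma of the biproduct injections.\<close>

definition cone_seq :: "nat \<Rightarrow> ('o,'m) tcat \<Rightarrow> ('o,'m) nseq \<Rightarrow> ('o,'m) nseq
    \<Rightarrow> (nat \<Rightarrow> 'm) \<Rightarrow> ('o,'m) nseq" where
  "cone_seq n C S T \<phi> =
    (let XA = fst (rot_seq n C S); YB = fst T; f = snd S; g = snd T;
         ZC = (\<lambda>i. dsum C (XA i) (YB i)) in
     (ZC, \<lambda>i. if i = n then
          madd C
           (cmp C (sgm C (inj1 C (XA 1) (YB 1))) (cmp C (mneg C (sgm C (f 1))) (prj1 C (XA n) (YB n))))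
           (madd C
             (cmp C (sgm C (inj2 C (XA 1) (YB 1))) (cmp C (sgm C (\<phi> 1)) (prj1 C (XA n) (YB n))))
             (cmp C (sgm C (inj2 C (XA 1) (YB 1))) (cmp C (g n) (prj2 C (XA n) (YB n)))))
        else
          madd C
           (cmp C (inj1 C (XA (Suc i)) (YB (Suc i))) (cmp C (mneg C (f (Suc i))) (prj1 C (XA i) (YB i))))
           (madd C
             (cmp C (inj2 C (XA (Suc i)) (YB (Suc i))) (cmp C (\<phi> (Suc i)) (prj1 C (XA i) (YB i))))
             (cmp C (inj2 C (XA (Suc i)) (YB (Suc i))) (cmp C (g i) (prj2 C (XA i) (YB i)))))))"

section \<open>n-angulated categories\<close>

definition n_angulated :: "nat \<Rightarrow> ('o,'m) tcat \<Rightarrow> ('o,'m) nseq set \<Rightarrow> bool" where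
  "n_angulated n C N \<longleftrightarrow>
    is_additive C \<and> is_sigma_auto C \<and>
    (\<forall>S\<in>N. is_nseq n C S) \<and>
    \<comment> \<open>(N1)(a)\<close>
    (\<forall>S\<in>N. \<forall>T\<in>N. seq_dsum n C S T \<in> N) \<and>
    (\<forall>S T. is_nseq n C S \<and> is_nseq n C T \<and> seq_dsum n C S T \<in> N \<longrightarrow> S \<in> N \<and> T \<in> N) \<and>
    (\<forall>S\<in>N. \<forall>T \<phi>. is_nseq n C T \<and> seq_iso n C S T \<phi> \<longrightarrow> T \<in> N) \<and>
    \<comment> \<open>(N1)(b)\<close>
    (\<forall>A\<in>ob C. triv_seq n C A \<in> N) \<and>
    \<comment> \<open>(N1)(c)\<close>
    (\<forall>A1\<in>ob C. \<forall>A2\<in>ob C. \<forall>f\<in>hom C A1 A2.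
       \<exists>S\<in>N. fst S 1 = A1 \<and> fst S 2 = A2 \<and> snd S 1 = f) \<and>
    \<comment> \<open>(N2)\<close>
    (\<forall>S. is_nseq n C S \<longrightarrow> (S \<in> N \<longleftrightarrow> rot_seq n C S \<in> N)) \<and>
    \<comment> \<open>(N3)\<close>
    (\<forall>S\<in>N. \<forall>T\<in>N. \<forall>\<phi>1 \<phi>2.
       \<phi>1 \<in> hom C (fst S 1) (fst T 1) \<and> \<phi>2 \<in> hom C (fst S 2) (fst T 2) \<and>
       cmp C (snd T 1) \<phi>1 = cmp C \<phi>2 (snd S 1) \<longrightarrow>
       (\<exists>\<phi>. \<phi> 1 = \<phi>1 \<and> \<phi> 2 = \<phi>2 \<and> seq_hom n C S T \<phi>)) \<and>
    \<comment> \<open>(N4)\<close>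
    (\<forall>S\<in>N. \<forall>T\<in>N. \<forall>\<phi>1 \<phi>2.
       \<phi>1 \<in> hom C (fst S 1) (fst T 1) \<and> \<phi>2 \<in> hom C (fst S 2) (fst T 2) \<and>
       cmp C (snd T 1) \<phi>1 = cmp C \<phi>2 (snd S 1) \<longrightarrow>
       (\<exists>\<phi>. \<phi> 1 = \<phi>1 \<and> \<phi> 2 = \<phi>2 \<and> seq_hom n C S T \<phi> \<and> cone_seq n C S T \<phi> \<in> N))"

section \<open>Symmetric monoidal structure and tensor n-angulated categories\<close>

definition is_sym_monoidal :: "('o,'m) tcat \<Rightarrow> bool" where
  "is_sym_monoidal C \<longleftrightarrow>
    tunit C \<in> ob C \<and>
    \<comment> \<open>additive bifunctor\<close>
    (\<forall>A\<in>ob C. \<forall>B\<in>ob C. tob C A B \<in> ob C) \<and>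
    (\<forall>A\<in>ob C. \<forall>A'\<in>ob C. \<forall>B\<in>ob C. \<forall>B'\<in>ob C. \<forall>f\<in>hom C A A'. \<forall>g\<in>hom C B B'.
        tmor C f g \<in> hom C (tob C A B) (tob C A' B')) \<and>
    (\<forall>A\<in>ob C. \<forall>B\<in>ob C. tmor C (idm C A) (idm C B) = idm C (tob C A B)) \<and>
    (\<forall>A\<in>ob C. \<forall>A'\<in>ob C. \<forall>A''\<in>ob C. \<forall>B\<in>ob C. \<forall>B'\<in>ob C. \<forall>B''\<in>ob C.
       \<forall>f\<in>hom C A A'. \<forall>f'\<in>hom C A' A''. \<forall>g\<in>hom C B B'. \<forall>g'\<in>hom C B' B''.
        tmor C (cmp C f' f) (cmp C g' g) = cmp C (tmor C f' g') (tmor C f g)) \<and>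
    (\<forall>A\<in>ob C. \<forall>A'\<in>ob C. \<forall>B\<in>ob C. \<forall>B'\<in>ob C. \<forall>f\<in>hom C A A'. \<forall>f'\<in>hom C A A'. \<forall>g\<in>hom C B B'.
        tmor C (madd C f f') g = madd C (tmor C f g) (tmor C f' g) \<and>
        tmor C g (madd C f f') = madd C (tmor C g f) (tmor C g f')) \<and>
    \<comment> \<open>the structure isomorphisms\<close>
    (\<forall>A\<in>ob C. \<forall>B\<in>ob C. \<forall>D\<in>ob C.
        is_iso C (tob C (tob C A B) D) (tob C A (tob C B D)) (asc C A B D)) \<and>
    (\<forall>A\<in>ob C. is_iso C (tob C (tunit C) A) A (lam C A)) \<and>
    (\<forall>A\<in>ob C. is_iso C (tob C A (tunit C)) A (rho C A)) \<and>
    (\<forall>A\<in>ob C. \<forall>B\<in>ob C. is_iso C (tob C A B) (tob C B A) (gam C A B)) \<and>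
    \<comment> \<open>naturality\<close>
    (\<forall>A\<in>ob C. \<forall>A'\<in>ob C. \<forall>B\<in>ob C. \<forall>B'\<in>ob C. \<forall>D\<in>ob C. \<forall>D'\<in>ob C.
       \<forall>f\<in>hom C A A'. \<forall>g\<in>hom C B B'. \<forall>h\<in>hom C D D'.
        cmp C (asc C A' B' D') (tmor C (tmor C f g) h)
          = cmp C (tmor C f (tmor C g h)) (asc C A B D)) \<and>
    (\<forall>A\<in>ob C. \<forall>A'\<in>ob C. \<forall>f\<in>hom C A A'.
        cmp C f (lam C A) = cmp C (lam C A') (tmor C (idm C (tunit C)) f) \<and>
        cmp C f (rho C A) = cmp C (rho C A') (tmor C f (idm C (tunit C)))) \<and>
    (\<forall>A\<in>ob C. \<forall>A'\<in>ob C. \<forall>B\<in>ob C. \<forall>B'\<in>ob C. \<forall>f\<in>hom C A A'. \<forall>g\<in>hom C B B'.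
        cmp C (tmor C g f) (gam C A B) = cmp C (gam C A' B') (tmor C f g)) \<and>
    \<comment> \<open>coherence: pentagon, triangle, symmetry, hexagon, unit/symmetry\<close>
    (\<forall>A\<in>ob C. \<forall>B\<in>ob C. \<forall>D\<in>ob C. \<forall>E\<in>ob C.
        cmp C (asc C A B (tob C D E)) (asc C (tob C A B) D E)
          = cmp C (tmor C (idm C A) (asc C B D E))
              (cmp C (asc C A (tob C B D) E) (tmor C (asc C A B D) (idm C E)))) \<and>
    (\<forall>A\<in>ob C. \<forall>B\<in>ob C.
        cmp C (tmor C (idm C A) (lam C B)) (asc C A (tunit C) B)
          = tmor C (rho C A) (idm C B)) \<and>
    (\<forall>A\<in>ob C. \<forall>B\<in>ob C. cmp C (gam C B A) (gam C A B) = idm C (tob C A B)) \<and>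
    (\<forall>A\<in>ob C. \<forall>B\<in>ob C. \<forall>D\<in>ob C.
        cmp C (asc C B D A) (cmp C (gam C A (tob C B D)) (asc C A B D))
          = cmp C (tmor C (idm C B) (gam C A D))
              (cmp C (asc C B A D) (tmor C (gam C A B) (idm C D)))) \<and>
    (\<forall>A\<in>ob C. rho C A = cmp C (lam C A) (gam C A (tunit C)))"

definition ltens_seq :: "nat \<Rightarrow> ('o,'m) tcat \<Rightarrow> 'o \<Rightarrow> ('o,'m) nseq \<Rightarrow> ('o,'m) nseq" where
  "ltens_seq n C A S =
    (\<lambda>i. tob C A (fst S i),
     \<lambda>i. if i = n then cmp C (ltc C A (fst S 1)) (tmor C (idm C A) (snd S n))
         else tmor C (idm C A) (snd S i))"

definition rtens_seq :: "nat \<Rightarrow> ('o,'m) tcat \<Rightarrow> 'o \<Rightarrow> ('o,'m) nseq \<Rightarrow> ('o,'m) nseq" where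
  "rtens_seq n C A S =
    (\<lambda>i. tob C (fst S i) A,
     \<lambda>i. if i = n then cmp C (rtc C (fst S 1) A) (tmor C (snd S n) (idm C A))
         else tmor C (snd S i) (idm C A))"

definition tensor_n_angulated :: "nat \<Rightarrow> ('o,'m) tcat \<Rightarrow> ('o,'m) nseq set \<Rightarrow> bool" where
  "tensor_n_angulated n C N \<longleftrightarrow>
    n_angulated n C N \<and> is_sym_monoidal C \<and>
    \<comment> \<open>(1) natural isomorphisms l and r\<close>
    (\<forall>A\<in>ob C. \<forall>B\<in>ob C.
        is_iso C (tob C A (sgo C B)) (sgo C (tob C A B)) (ltc C A B) \<and>
        is_iso C (tob C (sgo C A) B) (sgo C (tob C A B)) (rtc C A B)) \<and>
    (\<forall>A\<in>ob C. \<forall>A'\<in>ob C. \<forall>B\<in>ob C. \<forall>B'\<in>ob C. \<forall>f\<in>hom C A A'. \<forall>g\<in>hom C B B'.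
        cmp C (sgm C (tmor C f g)) (ltc C A B) = cmp C (ltc C A' B') (tmor C f (sgm C g)) \<and>
        cmp C (sgm C (tmor C f g)) (rtc C A B) = cmp C (rtc C A' B') (tmor C (sgm C f) g)) \<and>
    \<comment> \<open>(2) A * - and - * A are n-angulated\<close>
    (\<forall>A\<in>ob C. \<forall>S\<in>N. ltens_seq n C A S \<in> N \<and> rtens_seq n C A S \<in> N) \<and>
    \<comment> \<open>(3)\<close>
    (\<forall>A\<in>ob C. lam C (sgo C A) = cmp C (sgm C (lam C A)) (ltc C (tunit C) A) \<and>
               rho C (sgo C A) = cmp C (sgm C (rho C A)) (rtc C A (tunit C))) \<and>
    \<comment> \<open>(4)\<close>
    (\<forall>A\<in>ob C. \<forall>B\<in>ob C.
        cmp C (sgm C (ltc C A B)) (rtc C A (sgo C B))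
          = mneg C (cmp C (sgm C (rtc C A B)) (ltc C (sgo C A) B)))"

section \<open>Grothendieck group\<close>

definition isoclass :: "('o,'m) tcat \<Rightarrow> 'o \<Rightarrow> 'o set" where
  "isoclass C A = {B\<in>ob C. \<exists>f. is_iso C B A f}"

definition F_grp :: "('o,'m) tcat \<Rightarrow> ('o set \<Rightarrow>\<^sub>0 int) monoid" where
  "F_grp C = free_Abelian_group (isoclass C ` ob C)"

definition chi :: "nat \<Rightarrow> ('o,'m) tcat \<Rightarrow> ('o,'m) nseq \<Rightarrow> ('o set \<Rightarrow>\<^sub>0 int)" where
  "chi n C S = (\<Sum>i=1..n. frag_cmul ((-1) ^ (i+1)) (frag_of (isoclass C (fst S i))))"

definition R_gens :: "nat \<Rightarrow> ('o,'m) tcat \<Rightarrow> ('o,'m) nseq set \<Rightarrow> ('o set \<Rightarrow>\<^sub>0 int) set" where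
  "R_gens n C N = chi n C ` N \<union> (if even n then {frag_of (isoclass C (zobj C))} else {})"

definition R_sub :: "nat \<Rightarrow> ('o,'m) tcat \<Rightarrow> ('o,'m) nseq set \<Rightarrow> ('o set \<Rightarrow>\<^sub>0 int) set" where
  "R_sub n C N = generate (F_grp C) (R_gens n C N)"

definition K0 :: "nat \<Rightarrow> ('o,'m) tcat \<Rightarrow> ('o,'m) nseq set \<Rightarrow> ('o set \<Rightarrow>\<^sub>0 int) set monoid" where
  "K0 n C N = F_grp C Mod R_sub n C N"

definition K0_class :: "nat \<Rightarrow> ('o,'m) tcat \<Rightarrow> ('o,'m) nseq set \<Rightarrow> 'o \<Rightarrow> ('o set \<Rightarrow>\<^sub>0 int) set" where
  "K0_class n C N A = R_sub n C N #>\<^bsub>F_grp C\<^esub> frag_of (isoclass C A)"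

end

theory Submission
  imports Defs
begin

text \<open>Tensoring is associative, unital and commutative up to isomorphism, so it makes the
  set of isomorphism classes a commutative monoid M, and the free abelian group F(C) on
  that set is the monoid ring \<open>\<int>[M]\<close>, a commutative ring. For odd n the relation
  subgroup R(C) is generated by the Euler characteristics \<open>\<chi>(S)\<close> of n-angles S, and
  \<open>\<chi>(S)\<langle>B\<rangle> = \<chi>(S \<otimes> B)\<close> is again such a generator because \<open>- \<otimes> B\<close> preserves n-angles.
  Hence R(C) is an ideal and \<open>K\<^sub>0(C) = \<int>[M]/R(C)\<close> is a quotient ring.\<close>

definition frag_conv :: "('a \<Rightarrow> 'a \<Rightarrow> 'a) \<Rightarrow> ('a \<Rightarrow>\<^sub>0 int) \<Rightarrow> ('a \<Rightarrow>\<^sub>0 int) \<Rightarrow> ('a \<Rightarrow>\<^sub>0 int)" where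
  "frag_conv op x y = frag_extend (\<lambda>u. frag_extend (\<lambda>v. frag_of (op u v)) y) x"

lemma frag_conv_of_left: "frag_conv op (frag_of u) y = frag_extend (\<lambda>v. frag_of (op u v)) y"
  by (simp add: frag_conv_def)

lemma frag_conv_of_right: "frag_conv op x (frag_of v) = frag_extend (\<lambda>u. frag_of (op u v)) x"
  by (simp add: frag_conv_def)

lemma frag_conv_0_left [simp]: "frag_conv op 0 y = 0"
  by (simp add: frag_conv_def)

lemma frag_conv_0_right [simp]: "frag_conv op x 0 = 0"
  by (simp add: frag_conv_def frag_extend_eq_0)

lemma frag_conv_add_left: "frag_conv op (a + b) y = frag_conv op a y + frag_conv op b y"
  by (simp add: frag_conv_def frag_extend_add)

lemma frag_conv_diff_left: "frag_conv op (a - b) y = frag_conv op a y - frag_conv op b y"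
  by (simp add: frag_conv_def frag_extend_diff)

lemma frag_conv_minus_left: "frag_conv op (- a) y = - frag_conv op a y"
  by (simp add: frag_conv_def frag_extend_minus)

lemma frag_conv_diff_right: "frag_conv op x (a - b) = frag_conv op x a - frag_conv op x b"
  using subset_UNIV
  by (induction x rule: frag_induction)
     (simp_all add: frag_conv_of_left frag_extend_diff frag_conv_diff_left algebra_simps)

definition monoid_ring :: "('a, 'b) monoid_scheme \<Rightarrow> ('a \<Rightarrow>\<^sub>0 int) ring" where
  "monoid_ring M = \<lparr>carrier = {c. Poly_Mapping.keys c \<subseteq> carrier M},
     monoid.mult = frag_conv (\<otimes>\<^bsub>M\<^esub>), one = frag_of \<one>\<^bsub>M\<^esub>, ring.zero = 0, ring.add = (+)\<rparr>"

lemma add_monoid_monoid_ring: "add_monoid (monoid_ring M) = free_Abelian_group (carrier M)"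
  by (simp add: monoid_ring_def free_Abelian_group_def)

context comm_monoid
begin

lemma keys_frag_conv:
  assumes "Poly_Mapping.keys x \<subseteq> carrier G" "Poly_Mapping.keys y \<subseteq> carrier G"
  shows "Poly_Mapping.keys (frag_conv (\<otimes>) x y) \<subseteq> carrier G"
proof -
  have "Poly_Mapping.keys (frag_extend (\<lambda>v. frag_of (u \<otimes> v)) y) \<subseteq> carrier G"
    if "u \<in> carrier G" for u
    using keys_frag_extend[of "\<lambda>v. frag_of (u \<otimes> v)" y] assms(2) that
    by (auto simp: keys_frag_of)
  then show ?thesis
    unfolding frag_conv_def
    using keys_frag_extend[of "\<lambda>u. frag_extend (\<lambda>v. frag_of (u \<otimes> v)) y" x] assms(1)
    by blast
qed

lemma frag_conv_commute:
  assumes "Poly_Mapping.keys x \<subseteq> carrier G" "Poly_Mapping.keys y \<subseteq> carrier G"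
  shows "frag_conv (\<otimes>) x y = frag_conv (\<otimes>) y x"
  using assms(1)
proof (induction x rule: frag_induction)
  case (one u)
  show ?case
    unfolding frag_conv_of_left frag_conv_of_right
    by (rule frag_extend_eq) (use one assms(2) m_comm in auto)
qed (simp_all add: frag_conv_diff_left frag_conv_diff_right)

lemma frag_conv_assoc:
  assumes "Poly_Mapping.keys x \<subseteq> carrier G" "Poly_Mapping.keys y \<subseteq> carrier G"
    and "Poly_Mapping.keys z \<subseteq> carrier G"
  shows "frag_conv (\<otimes>) (frag_conv (\<otimes>) x y) z = frag_conv (\<otimes>) x (frag_conv (\<otimes>) y z)"
  using assms(1)
proof (induction x rule: frag_induction)
  case (one u)
  show ?case
    using assms(2)
  proof (induction y rule: frag_induction)
    case (one v)
    have "frag_conv (\<otimes>) (frag_of (u \<otimes> v)) z = frag_extend ((\<lambda>w. frag_of (u \<otimes> w)) \<circ> (\<otimes>) v) z"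
      unfolding frag_conv_of_left
      by (rule frag_extend_eq) (use \<open>u \<in> carrier G\<close> one assms(3) m_assoc in auto)
    also have "\<dots> = frag_extend (\<lambda>w. frag_of (u \<otimes> w)) (frag_extend (frag_of \<circ> (\<otimes>) v) z)"
      by (rule frag_extend_compose[symmetric])
    also have "\<dots> = frag_conv (\<otimes>) (frag_of u) (frag_conv (\<otimes>) (frag_of v) z)"
      by (simp add: frag_conv_of_left comp_def)
    finally show ?case
      by (simp add: frag_conv_of_left)
  qed (simp_all add: frag_conv_diff_left frag_conv_diff_right)
qed (simp_all add: frag_conv_diff_left)

lemma frag_conv_one_left:
  assumes "Poly_Mapping.keys x \<subseteq> carrier G"
  shows "frag_conv (\<otimes>) (frag_of \<one>) x = x"
  using assms
  by (induction x rule: frag_induction) (simp_all add: frag_conv_of_left frag_extend_diff)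

lemma cring_monoid_ring: "cring (monoid_ring G)"
proof (rule cringI)
  show "abelian_group (monoid_ring G)"
    using abelian_free_Abelian_group[of "carrier G"]
    by (intro comm_group_abelian_groupI) (simp add: monoid_ring_def free_Abelian_group_def)
  show "comm_monoid (monoid_ring G)"
    by (rule comm_monoidI)
       (auto simp: monoid_ring_def keys_frag_of keys_frag_conv frag_conv_assoc frag_conv_one_left
             intro: frag_conv_commute)
  show "(x \<oplus>\<^bsub>monoid_ring G\<^esub> y) \<otimes>\<^bsub>monoid_ring G\<^esub> z
      = x \<otimes>\<^bsub>monoid_ring G\<^esub> z \<oplus>\<^bsub>monoid_ring G\<^esub> y \<otimes>\<^bsub>monoid_ring G\<^esub> z" for x y z
    by (simp add: monoid_ring_def frag_conv_add_left)
qed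

lemma ideal_generate_monoid_ring:
  fixes gens :: "('a \<Rightarrow>\<^sub>0 int) set"
  defines "I \<equiv> generate (free_Abelian_group (carrier G)) gens"
  assumes gens: "gens \<subseteq> carrier (monoid_ring G)"
    and closed: "\<And>x u. x \<in> gens \<Longrightarrow> u \<in> carrier G \<Longrightarrow> frag_conv (\<otimes>) x (frag_of u) \<in> I"
  shows "ideal I (monoid_ring G)"
proof -
  let ?F = "free_Abelian_group (carrier G)"
  have gens_keys: "gens \<subseteq> carrier ?F"
    using gens by (simp add: monoid_ring_def free_Abelian_group_def)
  have sub: "subgroup I ?F"
    unfolding I_def by (rule group.generate_is_subgroup) (simp_all add: gens_keys)
  have I_keys: "Poly_Mapping.keys a \<subseteq> carrier G" if "a \<in> I" for a
    using subgroup.mem_carrier[OF sub that] by simp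
  have I_zero: "0 \<in> I"
    using subgroup.one_closed[OF sub] by simp
  have I_add: "a + b \<in> I" if "a \<in> I" "b \<in> I" for a b
    using subgroup.m_closed[OF sub that] by simp
  have I_diff: "a - b \<in> I" if "a \<in> I" "b \<in> I" for a b
    using I_add[OF that(1) subgroup.m_inv_closed[OF sub that(2)]] I_keys[OF that(2)] by simp
  have mult_frag_of: "frag_conv (\<otimes>) a (frag_of u) \<in> I" if "a \<in> I" "u \<in> carrier G" for a u
    using that(1) unfolding I_def
  proof (induction a rule: generate.induct)
    case one
    show ?case
      using I_zero by (simp add: I_def)
  next
    case (incl h)
    show ?case
      using closed[OF incl \<open>u \<in> carrier G\<close>] by (simp add: I_def)
  next
    case (inv h)
    have "inv\<^bsub>?F\<^esub> h = - h"
      using inv gens_keys by auto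
    then show ?case
      using I_diff[OF I_zero closed[OF inv \<open>u \<in> carrier G\<close>]] by (simp add: frag_conv_minus_left I_def)
  next
    case (eng h1 h2)
    then show ?case
      using I_add by (simp add: frag_conv_add_left I_def)
  qed
  have mult: "frag_conv (\<otimes>) a x \<in> I" if "a \<in> I" "Poly_Mapping.keys x \<subseteq> carrier G" for a x
    using that(2)
  proof (induction x rule: frag_induction)
    case (diff x y)
    then show ?case
      using I_diff by (simp add: frag_conv_diff_right)
  qed (simp_all add: I_zero mult_frag_of \<open>a \<in> I\<close>)
  show ?thesis
  proof (rule idealI)
    show "ring (monoid_ring G)"
      using cring_monoid_ring by (rule cring.axioms(1))
    show "subgroup I (add_monoid (monoid_ring G))"
      using sub by (simp only: add_monoid_monoid_ring)
    show "a \<otimes>\<^bsub>monoid_ring G\<^esub> x \<in> I"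
      if "a \<in> I" "x \<in> carrier (monoid_ring G)" for a x
      using mult that by (simp add: monoid_ring_def)
    show "x \<otimes>\<^bsub>monoid_ring G\<^esub> a \<in> I"
      if "a \<in> I" "x \<in> carrier (monoid_ring G)" for a x
    proof -
      have "x \<otimes>\<^bsub>monoid_ring G\<^esub> a = frag_conv (\<otimes>) a x"
        using that frag_conv_commute[OF _ I_keys] by (simp add: monoid_ring_def)
      then show ?thesis
        using mult that by (simp add: monoid_ring_def)
    qed
  qed
qed

end

locale category =
  fixes C :: "('o,'m) tcat"
  assumes category: "is_category C"
begin

lemma idm_hom: "A \<in> ob C \<Longrightarrow> idm C A \<in> hom C A A"
  using category unfolding is_category_def by blast

lemma cmp_hom:
  "\<lbrakk>A \<in> ob C; B \<in> ob C; D \<in> ob C; f \<in> hom C A B; g \<in> hom C B D\<rbrakk> \<Longrightarrow> cmp C g f \<in> hom C A D"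
  using category unfolding is_category_def by blast

lemma cmp_idm_left: "\<lbrakk>A \<in> ob C; B \<in> ob C; f \<in> hom C A B\<rbrakk> \<Longrightarrow> cmp C (idm C B) f = f"
  using category unfolding is_category_def by blast

lemma cmp_idm_right: "\<lbrakk>A \<in> ob C; B \<in> ob C; f \<in> hom C A B\<rbrakk> \<Longrightarrow> cmp C f (idm C A) = f"
  using category unfolding is_category_def by blast

lemma cmp_assoc:
  "\<lbrakk>A \<in> ob C; B \<in> ob C; D \<in> ob C; E \<in> ob C; f \<in> hom C A B; g \<in> hom C B D; h \<in> hom C D E\<rbrakk>
   \<Longrightarrow> cmp C h (cmp C g f) = cmp C (cmp C h g) f"
  using category unfolding is_category_def by blast

lemma is_iso_idm: "A \<in> ob C \<Longrightarrow> is_iso C A A (idm C A)"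
  unfolding is_iso_def using idm_hom cmp_idm_left by blast

lemma is_iso_inverse: "is_iso C A B f \<Longrightarrow> \<exists>g. is_iso C B A g"
  unfolding is_iso_def by blast

lemma is_iso_cmp:
  assumes ob: "A \<in> ob C" "B \<in> ob C" "D \<in> ob C"
    and f: "is_iso C A B f" and g: "is_iso C B D g"
  shows "is_iso C A D (cmp C g f)"
proof -
  obtain f' where f': "f \<in> hom C A B" "f' \<in> hom C B A" "cmp C f' f = idm C A" "cmp C f f' = idm C B"
    using f unfolding is_iso_def by blast
  obtain g' where g': "g \<in> hom C B D" "g' \<in> hom C D B" "cmp C g' g = idm C B" "cmp C g g' = idm C D"
    using g unfolding is_iso_def by blast
  have "cmp C (cmp C f' g') (cmp C g f) = cmp C (cmp C f' (cmp C g' g)) f"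
    using cmp_assoc[OF ob(1,2,3,1) f'(1) g'(1) cmp_hom[OF ob(3,2,1) g'(2) f'(2)]]
      cmp_assoc[OF ob(2,3,2,1) g'(1) g'(2) f'(2)] by simp
  also have "\<dots> = idm C A"
    using g'(3) cmp_idm_right[OF ob(2,1) f'(2)] f'(3) by simp
  finally have left: "cmp C (cmp C f' g') (cmp C g f) = idm C A" .
  have "cmp C (cmp C g f) (cmp C f' g') = cmp C (cmp C g (cmp C f f')) g'"
    using cmp_assoc[OF ob(3,2,1,3) g'(2) f'(2) cmp_hom[OF ob(1,2,3) f'(1) g'(1)]]
      cmp_assoc[OF ob(2,1,2,3) f'(2) f'(1) g'(1)] by simp
  also have "\<dots> = idm C D"
    using f'(4) cmp_idm_right[OF ob(2,3) g'(1)] g'(4) by simp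
  finally have right: "cmp C (cmp C g f) (cmp C f' g') = idm C D" .
  show ?thesis
    unfolding is_iso_def using ob f' g' left right by (blast intro: cmp_hom)
qed

lemma isoclass_eq_iff:
  assumes "A \<in> ob C" "B \<in> ob C"
  shows "isoclass C A = isoclass C B \<longleftrightarrow> (\<exists>f. is_iso C A B f)"
proof
  assume "isoclass C A = isoclass C B"
  then show "\<exists>f. is_iso C A B f"
    using assms is_iso_idm unfolding isoclass_def by blast
next
  assume "\<exists>f. is_iso C A B f"
  then obtain f g where "is_iso C A B f" "is_iso C B A g"
    using is_iso_inverse by blast
  then show "isoclass C A = isoclass C B"
    using assms unfolding isoclass_def by (blast intro: is_iso_cmp)
qed

end

definition isoclass_rep :: "('o,'m) tcat \<Rightarrow> 'o set \<Rightarrow> 'o" where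
  "isoclass_rep C U = (SOME A. A \<in> ob C \<and> isoclass C A = U)"

definition isoclass_tensor :: "('o,'m) tcat \<Rightarrow> 'o set \<Rightarrow> 'o set \<Rightarrow> 'o set" where
  "isoclass_tensor C U V = isoclass C (tob C (isoclass_rep C U) (isoclass_rep C V))"

definition isoclass_monoid :: "('o,'m) tcat \<Rightarrow> 'o set monoid" where
  "isoclass_monoid C =
     \<lparr>carrier = isoclass C ` ob C, monoid.mult = isoclass_tensor C, one = isoclass C (tunit C)\<rparr>"

lemma carrier_isoclass_monoidE:
  assumes "U \<in> carrier (isoclass_monoid C)"
  obtains A where "A \<in> ob C" "U = isoclass C A"
  using assms by (auto simp: isoclass_monoid_def)

locale sym_monoidal_category = category +
  assumes sym_monoidal: "is_sym_monoidal C"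
begin

lemma tob_closed: "\<lbrakk>A \<in> ob C; B \<in> ob C\<rbrakk> \<Longrightarrow> tob C A B \<in> ob C"
  using sym_monoidal unfolding is_sym_monoidal_def by (elim conjE) simp

lemma tunit_closed: "tunit C \<in> ob C"
  using sym_monoidal unfolding is_sym_monoidal_def by (elim conjE)

lemma tmor_hom:
  "\<lbrakk>A \<in> ob C; A' \<in> ob C; B \<in> ob C; B' \<in> ob C; f \<in> hom C A A'; g \<in> hom C B B'\<rbrakk>
   \<Longrightarrow> tmor C f g \<in> hom C (tob C A B) (tob C A' B')"
  using sym_monoidal unfolding is_sym_monoidal_def by (elim conjE) simp

lemma tmor_idm: "\<lbrakk>A \<in> ob C; B \<in> ob C\<rbrakk> \<Longrightarrow> tmor C (idm C A) (idm C B) = idm C (tob C A B)"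
  using sym_monoidal unfolding is_sym_monoidal_def by (elim conjE) simp

lemma tmor_cmp:
  "\<lbrakk>A \<in> ob C; A' \<in> ob C; A'' \<in> ob C; B \<in> ob C; B' \<in> ob C; B'' \<in> ob C;
    f \<in> hom C A A'; f' \<in> hom C A' A''; g \<in> hom C B B'; g' \<in> hom C B' B''\<rbrakk>
   \<Longrightarrow> tmor C (cmp C f' f) (cmp C g' g) = cmp C (tmor C f' g') (tmor C f g)"
  using sym_monoidal unfolding is_sym_monoidal_def by (elim conjE) simp

lemma asc_iso:
  "\<lbrakk>A \<in> ob C; B \<in> ob C; D \<in> ob C\<rbrakk>
   \<Longrightarrow> is_iso C (tob C (tob C A B) D) (tob C A (tob C B D)) (asc C A B D)"
  using sym_monoidal unfolding is_sym_monoidal_def by (elim conjE) simp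

lemma lam_iso: "A \<in> ob C \<Longrightarrow> is_iso C (tob C (tunit C) A) A (lam C A)"
  using sym_monoidal unfolding is_sym_monoidal_def by (elim conjE) simp

lemma gam_iso: "\<lbrakk>A \<in> ob C; B \<in> ob C\<rbrakk> \<Longrightarrow> is_iso C (tob C A B) (tob C B A) (gam C A B)"
  using sym_monoidal unfolding is_sym_monoidal_def by (elim conjE) simp

lemma tmor_iso:
  assumes ob: "A \<in> ob C" "A' \<in> ob C" "B \<in> ob C" "B' \<in> ob C"
    and f: "is_iso C A A' f" and g: "is_iso C B B' g"
  shows "is_iso C (tob C A B) (tob C A' B') (tmor C f g)"
proof -
  obtain f' where f': "f \<in> hom C A A'" "f' \<in> hom C A' A" "cmp C f' f = idm C A" "cmp C f f' = idm C A'"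
    using f unfolding is_iso_def by blast
  obtain g' where g': "g \<in> hom C B B'" "g' \<in> hom C B' B" "cmp C g' g = idm C B" "cmp C g g' = idm C B'"
    using g unfolding is_iso_def by blast
  have "cmp C (tmor C f' g') (tmor C f g) = idm C (tob C A B)"
    using tmor_cmp[OF ob(1,2,1,3,4,3) f'(1,2) g'(1,2)] f'(3) g'(3) tmor_idm[OF ob(1,3)] by simp
  moreover have "cmp C (tmor C f g) (tmor C f' g') = idm C (tob C A' B')"
    using tmor_cmp[OF ob(2,1,2,4,3,4) f'(2,1) g'(2,1)] f'(4) g'(4) tmor_idm[OF ob(2,4)] by simp
  ultimately show ?thesis
    unfolding is_iso_def using tmor_hom ob f' g' by blast
qed

lemma isoclass_rep:
  assumes "A \<in> ob C"
  shows "isoclass_rep C (isoclass C A) \<in> ob C" "isoclass C (isoclass_rep C (isoclass C A)) = isoclass C A"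
  using someI_ex[of "\<lambda>B. B \<in> ob C \<and> isoclass C B = isoclass C A"] assms
  unfolding isoclass_rep_def by blast+

lemma isoclass_tensor [simp]:
  assumes "A \<in> ob C" "B \<in> ob C"
  shows "isoclass_tensor C (isoclass C A) (isoclass C B) = isoclass C (tob C A B)"
proof -
  let ?A = "isoclass_rep C (isoclass C A)" and ?B = "isoclass_rep C (isoclass C B)"
  have reps: "?A \<in> ob C" "?B \<in> ob C"
    using isoclass_rep(1) assms by blast+
  obtain f where "is_iso C ?A A f"
    using isoclass_eq_iff[OF reps(1) assms(1)] isoclass_rep(2)[OF assms(1)] by blast
  moreover obtain g where "is_iso C ?B B g"
    using isoclass_eq_iff[OF reps(2) assms(2)] isoclass_rep(2)[OF assms(2)] by blast
  ultimately have "is_iso C (tob C ?A ?B) (tob C A B) (tmor C f g)"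
    using tmor_iso reps assms by blast
  then show ?thesis
    unfolding isoclass_tensor_def using isoclass_eq_iff tob_closed reps assms by blast
qed

lemma comm_monoid_isoclass_monoid: "comm_monoid (isoclass_monoid C)"
proof (rule comm_monoidI)
  fix x y z
  assume x: "x \<in> carrier (isoclass_monoid C)"
  then obtain A where A: "A \<in> ob C" "x = isoclass C A"
    by (rule carrier_isoclass_monoidE)
  show "\<one>\<^bsub>isoclass_monoid C\<^esub> \<otimes>\<^bsub>isoclass_monoid C\<^esub> x = x"
    using A lam_iso by (auto simp: isoclass_monoid_def tob_closed tunit_closed isoclass_eq_iff)
  assume y: "y \<in> carrier (isoclass_monoid C)"
  then obtain B where B: "B \<in> ob C" "y = isoclass C B"
    by (rule carrier_isoclass_monoidE)
  show "x \<otimes>\<^bsub>isoclass_monoid C\<^esub> y \<in> carrier (isoclass_monoid C)"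
    using A B by (simp add: isoclass_monoid_def tob_closed)
  show "x \<otimes>\<^bsub>isoclass_monoid C\<^esub> y = y \<otimes>\<^bsub>isoclass_monoid C\<^esub> x"
    using A B gam_iso by (auto simp: isoclass_monoid_def tob_closed isoclass_eq_iff)
  assume "z \<in> carrier (isoclass_monoid C)"
  then obtain D where D: "D \<in> ob C" "z = isoclass C D"
    by (rule carrier_isoclass_monoidE)
  show "x \<otimes>\<^bsub>isoclass_monoid C\<^esub> y \<otimes>\<^bsub>isoclass_monoid C\<^esub> z
      = x \<otimes>\<^bsub>isoclass_monoid C\<^esub> (y \<otimes>\<^bsub>isoclass_monoid C\<^esub> z)"
    using A B D asc_iso by (auto simp: isoclass_monoid_def tob_closed isoclass_eq_iff)
next
  show "\<one>\<^bsub>isoclass_monoid C\<^esub> \<in> carrier (isoclass_monoid C)"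
    by (simp add: isoclass_monoid_def tunit_closed)
qed

lemma chi_rtens_seq:
  assumes S: "\<forall>i\<in>{1..n}. fst S i \<in> ob C" and B: "B \<in> ob C"
  shows "frag_conv (isoclass_tensor C) (chi n C S) (frag_of (isoclass C B)) = chi n C (rtens_seq n C B S)"
proof -
  have "frag_conv (isoclass_tensor C) (chi n C S) (frag_of (isoclass C B))
      = (\<Sum>i=1..n. frag_cmul ((-1) ^ (i+1))
                      (frag_of (isoclass_tensor C (isoclass C (fst S i)) (isoclass C B))))"
    unfolding chi_def frag_conv_of_right by (simp add: frag_extend_sum frag_extend_cmul comp_def)
  also have "\<dots> = chi n C (rtens_seq n C B S)"
    unfolding chi_def rtens_seq_def by (rule sum.cong) (use S B in auto)
  finally show ?thesis .
qed

end

lemma tensor_n_angulated_sym_monoidal_category: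
  "tensor_n_angulated n C N \<Longrightarrow> sym_monoidal_category C"
  unfolding tensor_n_angulated_def n_angulated_def is_additive_def sym_monoidal_category_def
    sym_monoidal_category_axioms_def category_def
  by blast

lemma keys_chi:
  assumes "\<forall>i\<in>{1..n}. fst S i \<in> ob C"
  shows "Poly_Mapping.keys (chi n C S) \<subseteq> isoclass C ` ob C"
  unfolding chi_def
  by (rule order_trans[OF keys_sum]) (use assms keys_cmul in \<open>fastforce simp: keys_frag_of\<close>)

lemma ideal_R_sub:
  assumes "odd n" and tn: "tensor_n_angulated n C N"
  shows "ideal (R_sub n C N) (monoid_ring (isoclass_monoid C))"
proof -
  interpret sym_monoidal_category C
    using tn by (rule tensor_n_angulated_sym_monoidal_category)
  interpret M: comm_monoid "isoclass_monoid C"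
    by (rule comm_monoid_isoclass_monoid)
  have "\<forall>S\<in>N. is_nseq n C S"
    using tn unfolding tensor_n_angulated_def n_angulated_def by (elim conjE)
  then have objs: "\<forall>i\<in>{1..n}. fst S i \<in> ob C" if "S \<in> N" for S
    using that unfolding is_nseq_def by blast
  have "\<forall>A\<in>ob C. \<forall>S\<in>N. ltens_seq n C A S \<in> N \<and> rtens_seq n C A S \<in> N"
    using tn unfolding tensor_n_angulated_def by (elim conjE)
  then have rtens: "rtens_seq n C B S \<in> N" if "B \<in> ob C" "S \<in> N" for B S
    using that by blast
  have "R_sub n C N = generate (free_Abelian_group (carrier (isoclass_monoid C))) (chi n C ` N)"
    using \<open>odd n\<close> by (simp add: R_sub_def R_gens_def F_grp_def isoclass_monoid_def)
  also have "ideal \<dots> (monoid_ring (isoclass_monoid C))"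
  proof (rule M.ideal_generate_monoid_ring)
    show "chi n C ` N \<subseteq> carrier (monoid_ring (isoclass_monoid C))"
    proof (rule image_subsetI)
      show "chi n C S \<in> carrier (monoid_ring (isoclass_monoid C))" if "S \<in> N" for S
        using keys_chi[OF objs[OF that]] by (simp add: monoid_ring_def isoclass_monoid_def)
    qed
    fix x U
    assume "x \<in> chi n C ` N" "U \<in> carrier (isoclass_monoid C)"
    then obtain S B where S: "S \<in> N" and B: "B \<in> ob C" and "x = chi n C S" "U = isoclass C B"
      by (auto elim: carrier_isoclass_monoidE)
    then have "frag_conv (\<otimes>\<^bsub>isoclass_monoid C\<^esub>) x (frag_of U) = chi n C (rtens_seq n C B S)"
      using chi_rtens_seq[OF objs[OF S] B] by (simp add: isoclass_monoid_def)
    moreover have "chi n C (rtens_seq n C B S) \<in> chi n C ` N"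
      using rtens[OF B S] by blast
    ultimately show "frag_conv (\<otimes>\<^bsub>isoclass_monoid C\<^esub>) x (frag_of U)
        \<in> generate (free_Abelian_group (carrier (isoclass_monoid C))) (chi n C ` N)"
      by (simp add: generate.incl)
  qed
  finally show ?thesis .
qed

lemma FactRing_add_monoid_FactGroup:
  "carrier (R Quot I) = carrier (add_monoid R Mod I)"
  "(\<oplus>\<^bsub>R Quot I\<^esub>) = (\<otimes>\<^bsub>add_monoid R Mod I\<^esub>)"
  "\<zero>\<^bsub>R Quot I\<^esub> = \<one>\<^bsub>add_monoid R Mod I\<^esub>"
  by (simp_all add: FactRing_def FactGroup_def A_RCOSETS_def set_add_def)

lemma K0_eq_FactGroup:
  "K0 n C N = add_monoid (monoid_ring (isoclass_monoid C)) Mod R_sub n C N"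
  unfolding K0_def F_grp_def add_monoid_monoid_ring by (simp add: isoclass_monoid_def)

lemma K0_class_eq_coset:
  "K0_class n C N A = R_sub n C N +>\<^bsub>monoid_ring (isoclass_monoid C)\<^esub> frag_of (isoclass C A)"
  unfolding K0_class_def a_r_coset_def add_monoid_monoid_ring by (simp add: F_grp_def isoclass_monoid_def)

lemma (in sym_monoidal_category) K0_class_mult:
  assumes I: "ideal (R_sub n C N) (monoid_ring (isoclass_monoid C))"
    and A: "A \<in> ob C" and B: "B \<in> ob C"
  shows "K0_class n C N A \<otimes>\<^bsub>monoid_ring (isoclass_monoid C) Quot R_sub n C N\<^esub> K0_class n C N B
       = K0_class n C N (tob C A B)"
proof -
  let ?Z = "monoid_ring (isoclass_monoid C)" and ?R = "R_sub n C N"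
  have "K0_class n C N A \<otimes>\<^bsub>?Z Quot ?R\<^esub> K0_class n C N B
      = [mod ?R:] (?R +>\<^bsub>?Z\<^esub> frag_of (isoclass C A)) \<Otimes>\<^bsub>?Z\<^esub> (?R +>\<^bsub>?Z\<^esub> frag_of (isoclass C B))"
    by (simp add: K0_class_eq_coset FactRing_def)
  also have "\<dots> = ?R +>\<^bsub>?Z\<^esub> (frag_of (isoclass C A) \<otimes>\<^bsub>?Z\<^esub> frag_of (isoclass C B))"
    using A B by (intro ideal.rcoset_mult_add[OF I]) (auto simp: monoid_ring_def isoclass_monoid_def keys_frag_of)
  also have "\<dots> = K0_class n C N (tob C A B)"
    using A B by (simp add: K0_class_eq_coset monoid_ring_def isoclass_monoid_def frag_conv_of_left)
  finally show ?thesis .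
qed

theorem lemma5p1:
  fixes n :: nat and C :: "('o,'m) tcat" and N :: "('o,'m) nseq set"
  assumes "n \<ge> 3" and "odd n"
    and "tensor_n_angulated n C N"
  shows "\<exists>Rg :: ('o set \<Rightarrow>\<^sub>0 int) set ring.
           cring Rg \<and>
           carrier Rg = carrier (K0 n C N) \<and>
           (\<oplus>\<^bsub>Rg\<^esub>) = (\<otimes>\<^bsub>K0 n C N\<^esub>) \<and>
           \<zero>\<^bsub>Rg\<^esub> = \<one>\<^bsub>K0 n C N\<^esub> \<and>
           (\<forall>A\<in>ob C. \<forall>B\<in>ob C.
              K0_class n C N A \<otimes>\<^bsub>Rg\<^esub> K0_class n C N B = K0_class n C N (tob C A B))"
proof -
  interpret sym_monoidal_category C
    using assms(3) by (rule tensor_n_angulated_sym_monoidal_category)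
  let ?Z = "monoid_ring (isoclass_monoid C)" and ?R = "R_sub n C N"
  have ideal: "ideal ?R ?Z"
    using assms(2,3) by (rule ideal_R_sub)
  have "cring (?Z Quot ?R)"
    using ideal comm_monoid.cring_monoid_ring[OF comm_monoid_isoclass_monoid]
    by (rule ideal.quotient_is_cring)
  then show ?thesis
    using FactRing_add_monoid_FactGroup[of ?Z ?R] K0_class_mult[OF ideal]
    by (intro exI[of _ "?Z Quot ?R"]) (simp add: K0_eq_FactGroup)
qed

end
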